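(* Let $\mathfrak g$ be of type $G_2$ and $\lambda,\mu\in P^+$ with $\min\{m_2,n_2\}=0$. Then in $\mathcal F_{\lambda,\mu}$: $$(x^-_{(3,1)}\otimes t)^{(s)}(x^-_{(1,0)}\otimes1)^{(r)}v=0\quad\text{for all }r,s\in\mathbb Z_+\text{ with }r+s>m_1+n_1,$$ $$(x^-_{(1,0)}\otimes1)^{(r)}(x^-_{(1,1)}\otimes t)^{(s)}v=0\quad\text{for all }r,s\in\mathbb Z_+\text{ with }r-s>m_1+n_1.$$
   Context: $\mathfrak g$ is the simple Lie algebra of type $G_2$ with Cartan subalgebra $\mathfrak h$, simple roots $\alpha_1$ (short), $\alpha_2$ (long), coroots $h_1,h_2$, positive roots written $(r_1,r_2)$ for $r_1\alpha_1+r_2\alpha_2$ (namely $(1,0),(0,1),(1,1),(2,1),(3,1),(3,2)$), coroots $h_\alpha$, Chevalley basis $\{x^\pm_\alpha,h_i\}$, $\mathfrak n^+=\mathrm{span}\{x^+_\alpha\}$, dominant weights $P^+$; $m_i=\lambda(h_i)$, $n_i=\mu(h_i)$; $x^{(s)}=x^s/s!$. $\mathcal F_{\lambda,\mu}$ is the cyclic $\mathbf U(\mathfrak g\otimes\mathbb C[t])$-module generated by $v\ne0$ with relations $(\mathfrak n^+\otimes\mathbb C[t])v=0$; $(h\otimes t^r)v=\delta_{r,0}(\lambda+\mu)(h)v$ ($h\in\mathfrak h$); and for each positive root $\alpha$: $(x^-_\alpha\otimes1)^{(\lambda+\mu)(h_\alpha)+1}v=0$, $(x^-_\alpha\otimes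 t)^{\min\{\lambda(h_\alpha),\mu(h_\alpha)\}+1}v=0$, $(x^-_\alpha\otimes t^r)v=0$ for $r\ge2$. *)

theory Defs
  imports Complex_Main
begin

text \<open>
  Lie algebra of type G2, given by a Chevalley basis and its structure constants.
  Roots are written r1 alpha1 + r2 alpha2 with alpha1 short, alpha2 long.
  Xp_r1r2 = x^+_(r1,r2), Xm_r1r2 = x^-_(r1,r2), H1, H2 = simple coroots h_1, h_2.
  The structure constants were computed from an explicit faithful 7-dimensional
  matrix realisation (Chevalley generators e1, e2, f1, f2 with Cartan matrix
  alpha_2(h_1) = -3, alpha_1(h_2) = -1), with
  [x^+_a, x^-_a] = h_a the coroot of a and all constants integral.
\<close>

datatype g2b = Xp10 | Xp01 | Xp11 | Xp21 | Xp31 | Xp32 | Xm10 | Xm01 | Xm11 | Xm21 | Xm31 | Xm32 | H1 | H2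

text \<open>Entry (a, b, c, k): the coefficient of basis vector c in [a, b] is k
  (entries not listed are 0).\<close>

definition g2_sc :: "(g2b \<times> g2b \<times> g2b \<times> int) list" where
  "g2_sc = [
    (Xp10, Xp01, Xp11, 1),
    (Xp10, Xp11, Xp21, 2),
    (Xp10, Xp21, Xp31, 3),
    (Xp10, Xm10, H1, 1),
    (Xp10, Xm11, Xm01, - 3),
    (Xp10, Xm21, Xm11, - 2),
    (Xp10, Xm31, Xm21, - 1),
    (Xp10, H1, Xp10, - 2),
    (Xp10, H2, Xp10, 1),
    (Xp01, Xp10, Xp11, - 1),
    (Xp01, Xp31, Xp32, 1),
    (Xp01, Xm01, H2, 1),
    (Xp01, Xm11, Xm10, 1),
    (Xp01, Xm32, Xm31, - 1),
    (Xp01, H1, Xp01, 3),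
    (Xp01, H2, Xp01, - 2),
    (Xp11, Xp10, Xp21, - 2),
    (Xp11, Xp21, Xp32, - 3),
    (Xp11, Xm10, Xp01, - 3),
    (Xp11, Xm01, Xp10, 1),
    (Xp11, Xm11, H1, 1),
    (Xp11, Xm11, H2, 3),
    (Xp11, Xm21, Xm10, 2),
    (Xp11, Xm32, Xm21, 1),
    (Xp11, H1, Xp11, 1),
    (Xp11, H2, Xp11, - 1),
    (Xp21, Xp10, Xp31, - 3),
    (Xp21, Xp11, Xp32, 3),
    (Xp21, Xm10, Xp11, - 2),
    (Xp21, Xm11, Xp10, 2),
    (Xp21, Xm21, H1, 2),
    (Xp21, Xm21, H2, 3),
    (Xp21, Xm31, Xm10, 1),
    (Xp21, Xm32, Xm11, - 1),
    (Xp21, H1, Xp21, - 1),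
    (Xp31, Xp01, Xp32, - 1),
    (Xp31, Xm10, Xp21, - 1),
    (Xp31, Xm21, Xp10, 1),
    (Xp31, Xm31, H1, 1),
    (Xp31, Xm31, H2, 1),
    (Xp31, Xm32, Xm01, 1),
    (Xp31, H1, Xp31, - 3),
    (Xp31, H2, Xp31, 1),
    (Xp32, Xm01, Xp31, - 1),
    (Xp32, Xm11, Xp21, 1),
    (Xp32, Xm21, Xp11, - 1),
    (Xp32, Xm31, Xp01, 1),
    (Xp32, Xm32, H1, 1),
    (Xp32, Xm32, H2, 2),
    (Xp32, H2, Xp32, - 1),
    (Xm10, Xp10, H1, - 1),
    (Xm10, Xp11, Xp01, 3),
    (Xm10, Xp21, Xp11, 2),
    (Xm10, Xp31, Xp21, 1),
    (Xm10, Xm01, Xm11, - 1),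
    (Xm10, Xm11, Xm21, - 2),
    (Xm10, Xm21, Xm31, - 3),
    (Xm10, H1, Xm10, 2),
    (Xm10, H2, Xm10, - 1),
    (Xm01, Xp01, H2, - 1),
    (Xm01, Xp11, Xp10, - 1),
    (Xm01, Xp32, Xp31, 1),
    (Xm01, Xm10, Xm11, 1),
    (Xm01, Xm31, Xm32, - 1),
    (Xm01, H1, Xm01, - 3),
    (Xm01, H2, Xm01, 2),
    (Xm11, Xp10, Xm01, 3),
    (Xm11, Xp01, Xm10, - 1),
    (Xm11, Xp11, H1, - 1),
    (Xm11, Xp11, H2, - 3),
    (Xm11, Xp21, Xp10, - 2),
    (Xm11, Xp32, Xp21, - 1),
    (Xm11, Xm10, Xm21, 2),
    (Xm11, Xm21, Xm32, 3),
    (Xm11, H1, Xm11, - 1),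
    (Xm11, H2, Xm11, 1),
    (Xm21, Xp10, Xm11, 2),
    (Xm21, Xp11, Xm10, - 2),
    (Xm21, Xp21, H1, - 2),
    (Xm21, Xp21, H2, - 3),
    (Xm21, Xp31, Xp10, - 1),
    (Xm21, Xp32, Xp11, 1),
    (Xm21, Xm10, Xm31, 3),
    (Xm21, Xm11, Xm32, - 3),
    (Xm21, H1, Xm21, 1),
    (Xm31, Xp10, Xm21, 1),
    (Xm31, Xp21, Xm10, - 1),
    (Xm31, Xp31, H1, - 1),
    (Xm31, Xp31, H2, - 1),
    (Xm31, Xp32, Xp01, - 1),
    (Xm31, Xm01, Xm32, 1),
    (Xm31, H1, Xm31, 3),
    (Xm31, H2, Xm31, - 1),
    (Xm32, Xp01, Xm31, 1),
    (Xm32, Xp11, Xm21, - 1),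
    (Xm32, Xp21, Xm11, 1),
    (Xm32, Xp31, Xm01, - 1),
    (Xm32, Xp32, H1, - 1),
    (Xm32, Xp32, H2, - 2),
    (Xm32, H2, Xm32, 1),
    (H1, Xp10, Xp10, 2),
    (H1, Xp01, Xp01, - 3),
    (H1, Xp11, Xp11, - 1),
    (H1, Xp21, Xp21, 1),
    (H1, Xp31, Xp31, 3),
    (H1, Xm10, Xm10, - 2),
    (H1, Xm01, Xm01, 3),
    (H1, Xm11, Xm11, 1),
    (H1, Xm21, Xm21, - 1),
    (H1, Xm31, Xm31, - 3),
    (H2, Xp10, Xp10, - 1),
    (H2, Xp01, Xp01, 2),
    (H2, Xp11, Xp11, 1),
    (H2, Xp31, Xp31, - 1),
    (H2, Xp32, Xp32, 1),
    (H2, Xm10, Xm10, 1),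
    (H2, Xm01, Xm01, - 2),
    (H2, Xm11, Xm11, - 1),
    (H2, Xm31, Xm31, 1),
    (H2, Xm32, Xm32, - 1)
  ]"

definition g2_br :: "g2b \<Rightarrow> g2b \<Rightarrow> (g2b \<times> int) list" where
  "g2_br a b = [(c, k). (a', b', c, k) \<leftarrow> g2_sc, a' = a, b' = b]"

datatype proot = R10 | R01 | R11 | R21 | R31 | R32

fun xp :: "proot \<Rightarrow> g2b" where
  "xp R10 = Xp10" | "xp R01 = Xp01" | "xp R11 = Xp11"
| "xp R21 = Xp21" | "xp R31 = Xp31" | "xp R32 = Xp32"

fun xm :: "proot \<Rightarrow> g2b" where
  "xm R10 = Xm10" | "xm R01 = Xm01" | "xm R11 = Xm11"
| "xm R21 = Xm21" | "xm R31 = Xm31" | "xm R32 = Xm32"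

text \<open>Coroot h_alpha = c1 h_1 + c2 h_2; returns (c1, c2).\<close>

fun coroot :: "proot \<Rightarrow> nat \<times> nat" where
  "coroot R10 = (1, 0)" | "coroot R01 = (0, 1)" | "coroot R11 = (1, 3)"
| "coroot R21 = (2, 3)" | "coroot R31 = (1, 1)" | "coroot R32 = (1, 2)"

text \<open>For a dominant weight lambda with lambda(h_1) = m1, lambda(h_2) = m2:
  the value lambda(h_alpha).\<close>

definition wt_on :: "nat \<Rightarrow> nat \<Rightarrow> proot \<Rightarrow> nat" where
  "wt_on m1 m2 a = fst (coroot a) * m1 + snd (coroot a) * m2"

text \<open>A representation of the current algebra g (x) C[t] on a complex vector
  space 'v (scalar multiplication sc): rho a r is the action of a (x) t^r.\<close>

definition current_rep ::
  "(complex \<Rightarrow> 'v::ab_group_add \<Rightarrow> 'v) \<Rightarrow> (g2b \<Rightarrow> nat \<Rightarrow> 'v \<Rightarrow> 'v) \<Rightarrow> bool" where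
  "current_rep sc \<rho> \<longleftrightarrow>
     vector_space sc \<and>
     (\<forall>a r. Vector_Spaces.linear sc sc (\<rho> a r)) \<and>
     (\<forall>a b r s x. \<rho> a r (\<rho> b s x) - \<rho> b s (\<rho> a r x)
        = sum_list (map (\<lambda>(c, k). sc (of_int k) (\<rho> c (r + s) x)) (g2_br a b)))"

definition divpow :: "(complex \<Rightarrow> 'v \<Rightarrow> 'v) \<Rightarrow> ('v \<Rightarrow> 'v) \<Rightarrow> nat \<Rightarrow> 'v \<Rightarrow> 'v" where
  "divpow sc f s x = sc (1 / of_nat (fact s)) ((f ^^ s) x)"

text \<open>The defining relations of F_{lambda,mu} on the vector v, where
  lambda(h_i) = m_i, mu(h_i) = n_i.\<close>

definition F_rels ::
  "(complex \<Rightarrow> 'v::ab_group_add \<Rightarrow> 'v) \<Rightarrow> (g2b \<Rightarrow> nat \<Rightarrow> 'v \<Rightarrow> 'v) \<Rightarrow>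
   nat \<Rightarrow> nat \<Rightarrow> nat \<Rightarrow> nat \<Rightarrow> 'v \<Rightarrow> bool" where
  "F_rels sc \<rho> m1 m2 n1 n2 v \<longleftrightarrow>
     (\<forall>a r. \<rho> (xp a) r v = 0) \<and>
     (\<forall>r. \<rho> H1 r v = (if r = 0 then sc (of_nat (m1 + n1)) v else 0)) \<and>
     (\<forall>r. \<rho> H2 r v = (if r = 0 then sc (of_nat (m2 + n2)) v else 0)) \<and>
     (\<forall>a. divpow sc (\<rho> (xm a) 0) (wt_on (m1 + n1) (m2 + n2) a + 1) v = 0) \<and>
     (\<forall>a. divpow sc (\<rho> (xm a) 1) (min (wt_on m1 m2 a) (wt_on n1 n2 a) + 1) v = 0) \<and>
     (\<forall>a r. 2 \<le> r \<longrightarrow> \<rho> (xm a) r v = 0)"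

end

theory Submission
  imports Defs
begin

text \<open>
  Both relations are sl2 statements for the triple E, F, H of the short simple root alpha_1,
  applied to vectors built from v by the loop elements Z_j = x^-_(j,1) \<otimes> t, j = 0..3,
  which span a 4-dimensional sl2-module. A vector u of H-weight k on which F is nilpotent
  and E^(p+1) vanishes is killed by F^r for all r > k + p (descending induction on r, using
  E F^(r+1) u = F^(r+1) E u + (r+1)(k-r) F^r u).

  For the first relation take u = Z_3^s v: it has weight N - 3s with N = m_1 + n_1, F commutes
  with Z_3, and E^(2s+1) kills it, because each Z_3 contributes an E-string of length 2 once
  Z_0 \<otimes> t acts trivially; this is where min(m_2, n_2) = 0 enters, through Z_0 v = 0.
  For the second take u = Z_1^s v: it has weight N + s, E kills it, and F^(N+1+2s) kills it.
\<close>

\<comment> \<open>Keeps the loop degree in \<open>\<rho> a 1\<close> from being rewritten to \<open>Suc 0\<close>.\<close>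
declare One_nat_def [simp del]

lemma funpow_zero_fixed:
  fixes T :: "'a::zero \<Rightarrow> 'a"
  shows "T 0 = 0 \<Longrightarrow> (T ^^ n) 0 = 0"
  by (induction n) simp_all

lemma funpow_eq_0_beyond:
  fixes T :: "'a::zero \<Rightarrow> 'a"
  assumes "T 0 = 0" and "(T ^^ M) u = 0" and "M \<le> r"
  shows "(T ^^ r) u = 0"
proof -
  have "(T ^^ r) u = (T ^^ (r - M)) ((T ^^ M) u)"
    using \<open>M \<le> r\<close> by (metis comp_apply funpow_add le_add_diff_inverse2)
  then show ?thesis using assms(1,2) by (simp add: funpow_zero_fixed)
qed

lemma funpow_vanishing_descent:
  fixes T :: "'a::zero \<Rightarrow> 'a"
  assumes "T 0 = 0" and "(T ^^ M) u = 0"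
    and step: "\<And>r. b < int r \<Longrightarrow> (T ^^ Suc r) u = 0 \<Longrightarrow> (T ^^ r) u = 0"
    and "b < int r"
  shows "(T ^^ r) u = 0"
proof -
  have "r \<le> max r M" by simp
  then show ?thesis
  proof (induction rule: inc_induct)
    case base
    show ?case using funpow_eq_0_beyond[OF assms(1,2)] by simp
  next
    case (step n)
    then show ?case using assms(3,4) by simp
  qed
qed

lemma funpow_annihilates_filtration:
  fixes T :: "'a::zero \<Rightarrow> 'a"
  assumes "\<And>x. P 0 x \<Longrightarrow> x = 0" and "\<And>n x. P (Suc n) x \<Longrightarrow> P n (T x)"
  shows "P n x \<Longrightarrow> (T ^^ n) x = 0"
  by (induction n arbitrary: x)
    (use assms in \<open>auto simp: funpow_Suc_right simp del: funpow.simps\<close>)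

locale sl2_action = vector_space sc for sc :: "complex \<Rightarrow> 'v::ab_group_add \<Rightarrow> 'v" +
  fixes E F H :: "'v \<Rightarrow> 'v"
  assumes linear_E: "Vector_Spaces.linear sc sc E"
    and linear_F: "Vector_Spaces.linear sc sc F"
    and E_F: "E (F x) = F (E x) + H x"
    and H_E: "H (E x) = E (H x) + sc 2 (E x)"
    and H_F: "H (F x) = F (H x) - sc 2 (F x)"
begin

sublocale E: Vector_Spaces.linear sc sc E by (fact linear_E)
sublocale F: Vector_Spaces.linear sc sc F by (fact linear_F)

lemma H_E_eigen: "H u = sc k u \<Longrightarrow> H (E u) = sc (k + 2) (E u)"
  by (simp add: H_E E.scale scale_left_distrib)

lemma H_F_pow_eigen:
  assumes "H u = sc (of_int k) u"
  shows "H ((F ^^ n) u) = sc (of_int (k - 2 * int n)) ((F ^^ n) u)"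
proof (induction n)
  case (Suc n)
  have "H ((F ^^ Suc n) u) = sc (of_int (k - 2 * int n)) (F ((F ^^ n) u)) - sc 2 (F ((F ^^ n) u))"
    by (simp add: H_F Suc.IH F.scale)
  also have "\<dots> = sc (of_int (k - 2 * int n) - 2) (F ((F ^^ n) u))"
    by (rule scale_left_diff_distrib[symmetric])
  finally show ?case by simp
qed (simp add: assms)

lemma E_F_pow:
  assumes "H u = sc (of_int k) u"
  shows "E ((F ^^ Suc n) u)
    = (F ^^ Suc n) (E u) + sc (of_int ((int n + 1) * (k - int n))) ((F ^^ n) u)"
proof (induction n)
  case 0
  show ?case by (simp add: E_F assms)
next
  case (Suc n)
  have "E ((F ^^ Suc (Suc n)) u) = F (E ((F ^^ Suc n) u)) + H ((F ^^ Suc n) u)"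
    by (simp add: E_F)
  also have "\<dots> = (F ^^ Suc (Suc n)) (E u)
      + sc (of_int ((int n + 1) * (k - int n)) + of_int (k - 2 * int (Suc n))) ((F ^^ Suc n) u)"
    unfolding Suc.IH H_F_pow_eigen[OF assms]
    by (simp add: F.add F.scale scale_left_distrib add.assoc)
  also have "of_int ((int n + 1) * (k - int n)) + of_int (k - 2 * int (Suc n))
      = (of_int ((int (Suc n) + 1) * (k - int (Suc n))) :: complex)"
    by (simp add: algebra_simps)
  finally show ?case .
qed

text \<open>Descending induction on r: once F^(r+1) u = 0, E_F_pow leaves (r+1)(k-r) F^r u = 0,
  and the coefficient is nonzero for r > k.\<close>
lemma F_pow_descent:
  assumes "H u = sc (of_int k) u" and "(F ^^ M) u = 0" and "k \<le> b"
    and E_u: "\<And>r. b < int r \<Longrightarrow> (F ^^ Suc r) (E u) = 0"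
    and "b < int r"
  shows "(F ^^ r) u = 0"
proof (rule funpow_vanishing_descent[OF F.zero assms(2) _ assms(5)])
  fix r assume r: "b < int r" and "(F ^^ Suc r) u = 0"
  then have "sc (of_int ((int r + 1) * (k - int r))) ((F ^^ r) u) = 0"
    using E_F_pow[OF assms(1), of r] E_u[OF r] by simp
  moreover have "(of_int ((int r + 1) * (k - int r)) :: complex) \<noteq> 0"
    unfolding of_int_eq_0_iff using r \<open>k \<le> b\<close> by simp
  ultimately show "(F ^^ r) u = 0" by simp
qed

lemma F_pow_vanishes:
  assumes "H u = sc (of_int k) u" and "(E ^^ Suc p) u = 0" and "(F ^^ M) u = 0"
    and "k + int p < int r"
  shows "(F ^^ r) u = 0"
  using assms
proof (induction p arbitrary: u k M r)
  case 0
  have "E u = 0" using "0.prems"(2) by simp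
  show ?case
    by (rule F_pow_descent[of u k M k])
      (use \<open>E u = 0\<close> "0.prems" in \<open>simp_all add: funpow_zero_fixed\<close>)
next
  case (Suc p)
  have weight: "H (E u) = sc (of_int (k + 2)) (E u)"
    using H_E_eigen[OF Suc.prems(1)] by simp
  have E_pow: "(E ^^ Suc p) (E u) = 0"
    using Suc.prems(2) by (simp only: funpow_Suc_right comp_apply)
  have F_pow: "(F ^^ Suc M) (E u) = 0"
    using E_F_pow[OF Suc.prems(1), of M] Suc.prems(3) by simp
  have E_u: "(F ^^ Suc r') (E u) = 0" if "k + int (Suc p) < int r'" for r'
    using Suc.IH[OF weight E_pow F_pow, of "Suc r'"] that by simp
  show ?case
    by (rule F_pow_descent[OF Suc.prems(1,3) _ E_u]) (use Suc.prems(4) in simp_all)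
qed

end

locale g2_current_rep =
  fixes sc :: "complex \<Rightarrow> 'v::ab_group_add \<Rightarrow> 'v"
    and \<rho> :: "g2b \<Rightarrow> nat \<Rightarrow> 'v \<Rightarrow> 'v"
  assumes current_rep: "current_rep sc \<rho>"
begin

sublocale vector_space sc
  using current_rep by (simp add: current_rep_def)

lemma linear_rho: "Vector_Spaces.linear sc sc (\<rho> a r)"
  using current_rep by (simp add: current_rep_def)

lemma rho_add: "\<rho> a r (x + y) = \<rho> a r x + \<rho> a r y"
  and rho_scale: "\<rho> a r (sc c x) = sc c (\<rho> a r x)"
  using linear_rho[of a r] by (simp_all add: Vector_Spaces.linear_iff)

lemma rho_zero: "\<rho> a r 0 = 0"
  using rho_add[of a r 0 0] by simp

lemma rho_pow_scale: "(\<rho> a r ^^ n) (sc c x) = sc c ((\<rho> a r ^^ n) x)"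
  by (induction n) (simp_all add: rho_scale)

lemma rho_bracket:
  "\<rho> a r (\<rho> b s x)
    = \<rho> b s (\<rho> a r x) + (\<Sum>(c, k)\<leftarrow>g2_br a b. sc (of_int k) (\<rho> c (r + s) x))"
  using current_rep unfolding current_rep_def by (metis add.commute diff_eq_eq)

lemma rho_preserves_high_annihilator:
  assumes "\<And>c r. 2 \<le> r \<Longrightarrow> \<rho> c r x = 0" and "2 \<le> r"
  shows "\<rho> c r (\<rho> b s x) = 0"
proof -
  have "(\<Sum>(c', k)\<leftarrow>L. sc (of_int k) (\<rho> c' (r + s) x)) = 0" for L
    using assms by (induction L) auto
  then show ?thesis
    using assms by (simp add: rho_bracket[of c r b s x] rho_zero)
qed

lemma divpow_eq_0_iff: "divpow sc f n x = 0 \<longleftrightarrow> (f ^^ n) x = 0"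
  by (simp add: divpow_def)

lemma divpow_divpow_eq_0_iff:
  "divpow sc (\<rho> a r) s (divpow sc g m x) = 0 \<longleftrightarrow> (\<rho> a r ^^ s) ((g ^^ m) x) = 0"
  by (simp add: divpow_def rho_pow_scale)

abbreviation "E \<equiv> \<rho> Xp10 0"
abbreviation "F \<equiv> \<rho> Xm10 0"
abbreviation "H \<equiv> \<rho> H1 0"

text \<open>Z_j is x^-_(j,1) \<otimes> t; bracketing with E and F moves it to multiples of Z_(j-1) and
  Z_(j+1).\<close>
abbreviation "Z3 \<equiv> \<rho> Xm31 1"
abbreviation "Z2 \<equiv> \<rho> Xm21 1"
abbreviation "Z1 \<equiv> \<rho> Xm11 1"
abbreviation "Z0 \<equiv> \<rho> Xm01 1"

sublocale sl2_action sc E F H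
proof (rule sl2_action.intro[OF vector_space_axioms sl2_action_axioms.intro])
  show "Vector_Spaces.linear sc sc E" "Vector_Spaces.linear sc sc F"
    by (fact linear_rho)+
  show "E (F x) = F (E x) + H x" for x
    using rho_bracket[of Xp10 0 Xm10 0 x] by (simp add: g2_br_def g2_sc_def)
  show "H (E x) = E (H x) + sc 2 (E x)" for x
    using rho_bracket[of H1 0 Xp10 0 x] by (simp add: g2_br_def g2_sc_def)
  show "H (F x) = F (H x) - sc 2 (F x)" for x
    using rho_bracket[of H1 0 Xm10 0 x] by (simp add: g2_br_def g2_sc_def)
qed

lemma comm_H_Z3: "H (Z3 x) = Z3 (H x) + sc (-3) (Z3 x)"
  using rho_bracket[of H1 0 Xm31 1 x] by (simp add: g2_br_def g2_sc_def)
lemma comm_H_Z1: "H (Z1 x) = Z1 (H x) + Z1 x"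
  using rho_bracket[of H1 0 Xm11 1 x] by (simp add: g2_br_def g2_sc_def)
lemma comm_F_Z3: "F (Z3 x) = Z3 (F x)"
  using rho_bracket[of Xm10 0 Xm31 1 x] by (simp add: g2_br_def g2_sc_def)
lemma comm_F_Z2: "F (Z2 x) = Z2 (F x) + sc (-3) (Z3 x)"
  using rho_bracket[of Xm10 0 Xm21 1 x] by (simp add: g2_br_def g2_sc_def)
lemma comm_F_Z1: "F (Z1 x) = Z1 (F x) + sc (-2) (Z2 x)"
  using rho_bracket[of Xm10 0 Xm11 1 x] by (simp add: g2_br_def g2_sc_def)
lemma comm_E_Z3: "E (Z3 x) = Z3 (E x) + sc (-1) (Z2 x)"
  using rho_bracket[of Xp10 0 Xm31 1 x] by (simp add: g2_br_def g2_sc_def)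
lemma comm_E_Z2: "E (Z2 x) = Z2 (E x) + sc (-2) (Z1 x)"
  using rho_bracket[of Xp10 0 Xm21 1 x] by (simp add: g2_br_def g2_sc_def)
lemma comm_E_Z1: "E (Z1 x) = Z1 (E x) + sc (-3) (Z0 x)"
  using rho_bracket[of Xp10 0 Xm11 1 x] by (simp add: g2_br_def g2_sc_def)
lemma comm_Z0_Z3: "Z0 (Z3 x) = Z3 (Z0 x) + sc (-1) (\<rho> Xm32 2 x)"
  using rho_bracket[of Xm01 1 Xm31 1 x] by (simp add: g2_br_def g2_sc_def numeral_2_eq_2)
lemma comm_Z0_Z2: "Z0 (Z2 x) = Z2 (Z0 x)"
  using rho_bracket[of Xm01 1 Xm21 1 x] by (simp add: g2_br_def g2_sc_def)
lemma comm_Z0_Z1: "Z0 (Z1 x) = Z1 (Z0 x)"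
  using rho_bracket[of Xm01 1 Xm11 1 x] by (simp add: g2_br_def g2_sc_def)

end

locale g2_generator = g2_current_rep sc \<rho>
  for sc :: "complex \<Rightarrow> 'v::ab_group_add \<Rightarrow> 'v" and \<rho> +
  fixes v :: 'v and N :: nat
  assumes H_v: "\<rho> H1 0 v = sc (of_nat N) v"
    and E_v: "\<rho> Xp10 0 v = 0"
    and F_pow_v: "(\<rho> Xm10 0 ^^ Suc N) v = 0"
    and Z0_v: "\<rho> Xm01 1 v = 0"
    and high_degree_v: "\<And>c r. 2 \<le> r \<Longrightarrow> \<rho> c r v = 0"
begin

text \<open>F_depth n x certifies F^n x = 0: F^m v has depth N + 1 - m, Z_j adds 3 - j (the length
  of its F-string), and F lowers the depth by one.\<close>
inductive F_depth :: "nat \<Rightarrow> 'v \<Rightarrow> bool" where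
  F_pow: "N < m + n \<Longrightarrow> F_depth n ((F ^^ m) v)"
| Z3: "F_depth n x \<Longrightarrow> F_depth n (Z3 x)"
| Z2: "F_depth n x \<Longrightarrow> F_depth (Suc n) (Z2 x)"
| Z1: "F_depth n x \<Longrightarrow> F_depth (Suc (Suc n)) (Z1 x)"
| zero: "F_depth n 0"
| add: "F_depth n x \<Longrightarrow> F_depth n y \<Longrightarrow> F_depth n (x + y)"
| scale: "F_depth n x \<Longrightarrow> F_depth n (sc c x)"
| Suc: "F_depth n x \<Longrightarrow> F_depth (Suc n) x"

lemma F_depth_mono: "F_depth n x \<Longrightarrow> n \<le> m \<Longrightarrow> F_depth m x"
  by (induction m) (auto intro: F_depth.Suc simp: le_Suc_eq)

lemma F_depth_0: "F_depth 0 x \<Longrightarrow> x = 0"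
proof (induction "0::nat" x rule: F_depth.induct)
  case (F_pow m)
  then show ?case using funpow_eq_0_beyond[OF rho_zero F_pow_v, of m] by simp
qed (simp_all add: rho_zero)

lemma F_depth_F: "F_depth n x \<Longrightarrow> F_depth (n - 1) (F x)"
proof (induction rule: F_depth.induct)
  case (F_pow m n)
  have "F_depth (n - 1) ((F ^^ Suc m) v)"
    using F_pow by (intro F_depth.F_pow) arith
  then show ?case by simp
next
  case (Z2 n x)
  have "F_depth n (Z2 (F x))"
  proof (cases n)
    case 0
    then show ?thesis using F_depth_0[of x] Z2.hyps by (simp add: rho_zero F_depth.zero)
  qed (use F_depth.Z2[OF Z2.IH] in simp)
  moreover have "F_depth n (sc (-3) (Z3 x))"
    by (intro F_depth.scale F_depth.Z3 Z2.hyps)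
  ultimately show ?case
    by (simp add: comm_F_Z2 F_depth.add del: scale_minus_left)
next
  case (Z1 n x)
  have "F_depth (Suc n) (Z1 (F x))"
  proof (cases n)
    case 0
    then show ?thesis using F_depth_0[of x] Z1.hyps by (simp add: rho_zero F_depth.zero)
  qed (use F_depth.Z1[OF Z1.IH] in simp)
  moreover have "F_depth (Suc n) (sc (-2) (Z2 x))"
    by (intro F_depth.scale F_depth.Z2 Z1.hyps)
  ultimately show ?case
    by (simp add: comm_F_Z1 F_depth.add del: scale_minus_left)
next
  case (Suc n x)
  then show ?case by (auto intro: F_depth_mono)
qed (simp_all add: comm_F_Z3 rho_add rho_scale rho_zero F_depth.intros)

lemma F_depth_Z1_pow: "F_depth (N + 1 + 2 * s) ((Z1 ^^ s) v)"
proof (induction s)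
  case 0
  show ?case using F_depth.F_pow[of 0 "N + 1"] by simp
next
  case (Suc s)
  then show ?case using F_depth.Z1 by fastforce
qed

lemma H_Z1_pow_v: "H ((Z1 ^^ s) v) = sc (of_int (int N + int s)) ((Z1 ^^ s) v)"
proof (induction s)
  case (Suc s)
  have "H ((Z1 ^^ Suc s) v) = Z1 (H ((Z1 ^^ s) v)) + Z1 ((Z1 ^^ s) v)"
    by (simp add: comm_H_Z1)
  also have "\<dots> = sc (of_int (int N + int s) + 1) (Z1 ((Z1 ^^ s) v))"
    by (simp only: Suc.IH rho_scale scale_left_distrib scale_one)
  finally show ?case by simp
qed (simp add: H_v)

lemma E_Z1_pow_v: "E ((Z1 ^^ s) v) = 0"
proof -
  have Z0: "Z0 ((Z1 ^^ n) v) = 0" for n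
    by (induction n) (simp_all add: Z0_v comm_Z0_Z1 rho_zero)
  show ?thesis
    by (induction s) (simp_all add: E_v comm_E_Z1 Z0 rho_zero)
qed

lemma F_depth_annihilated: "F_depth n x \<Longrightarrow> (F ^^ n) x = 0"
  by (rule funpow_annihilates_filtration[of F_depth]) (use F_depth_0 F_depth_F in fastforce)+

lemma F_pow_Z1_pow_v: "int N + int s < int r \<Longrightarrow> (F ^^ r) ((Z1 ^^ s) v) = 0"
  by (rule F_pow_vanishes[OF H_Z1_pow_v, where p = 0 and M = "N + 1 + 2 * s"])
    (simp_all add: E_Z1_pow_v F_depth_annihilated[OF F_depth_Z1_pow])

text \<open>E_depth n x certifies E^n x = 0: v has depth 1 and Z_j adds j - 1. Z1 costs nothing
  because Z0 kills all such vectors: it commutes with Z2 and Z1, kills v, and [Z0, Z3] lies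
  in degree t^2.\<close>
inductive E_depth :: "nat \<Rightarrow> 'v \<Rightarrow> bool" where
  generator: "E_depth (Suc n) v"
| Z3: "E_depth n x \<Longrightarrow> E_depth (Suc (Suc n)) (Z3 x)"
| Z2: "E_depth n x \<Longrightarrow> E_depth (Suc n) (Z2 x)"
| Z1: "E_depth n x \<Longrightarrow> E_depth n (Z1 x)"
| zero: "E_depth n 0"
| add: "E_depth n x \<Longrightarrow> E_depth n y \<Longrightarrow> E_depth n (x + y)"
| scale: "E_depth n x \<Longrightarrow> E_depth n (sc c x)"
| Suc: "E_depth n x \<Longrightarrow> E_depth (Suc n) x"

lemma E_depth_mono: "E_depth n x \<Longrightarrow> n \<le> m \<Longrightarrow> E_depth m x"
  by (induction m) (auto intro: E_depth.Suc simp: le_Suc_eq)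

lemma E_depth_0: "E_depth 0 x \<Longrightarrow> x = 0"
  by (induction "0::nat" x rule: E_depth.induct) (simp_all add: rho_zero)

lemma E_depth_high_degree: "E_depth n x \<Longrightarrow> 2 \<le> r \<Longrightarrow> \<rho> c r x = 0"
  by (induction arbitrary: c r rule: E_depth.induct)
    (simp_all add: high_degree_v rho_preserves_high_annihilator rho_add rho_scale rho_zero)

lemma E_depth_Z0: "E_depth n x \<Longrightarrow> Z0 x = 0"
proof (induction rule: E_depth.induct)
  case (Z3 n x)
  then show ?case
    using E_depth_high_degree[OF Z3.hyps, of 2 Xm32] by (simp add: comm_Z0_Z3 rho_zero)
qed (simp_all add: Z0_v comm_Z0_Z2 comm_Z0_Z1 rho_add rho_scale rho_zero)

lemma E_depth_E: "E_depth n x \<Longrightarrow> E_depth (n - 1) (E x)"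
proof (induction rule: E_depth.induct)
  case (generator n)
  then show ?case by (simp add: E_v E_depth.zero)
next
  case (Z3 n x)
  have "E_depth (Suc n) (Z3 (E x))"
  proof (cases n)
    case 0
    then show ?thesis using E_depth_0[of x] Z3.hyps by (simp add: rho_zero E_depth.zero)
  qed (use E_depth.Z3[OF Z3.IH] in simp)
  moreover have "E_depth (Suc n) (sc (-1) (Z2 x))"
    by (intro E_depth.scale E_depth.Z2 Z3.hyps)
  ultimately show ?case
    by (simp add: comm_E_Z3 E_depth.add del: scale_minus_left)
next
  case (Z2 n x)
  have "E_depth n (Z2 (E x))"
  proof (cases n)
    case 0
    then show ?thesis using E_depth_0[of x] Z2.hyps by (simp add: rho_zero E_depth.zero)
  qed (use E_depth.Z2[OF Z2.IH] in simp)
  moreover have "E_depth n (sc (-2) (Z1 x))"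
    by (intro E_depth.scale E_depth.Z1 Z2.hyps)
  ultimately show ?case
    by (simp add: comm_E_Z2 E_depth.add del: scale_minus_left)
next
  case (Z1 n x)
  then show ?case by (simp add: comm_E_Z1 E_depth_Z0 E_depth.Z1 rho_zero)
next
  case (Suc n x)
  then show ?case by (auto intro: E_depth_mono)
qed (simp_all add: rho_add rho_scale rho_zero E_depth.intros)

lemma E_depth_annihilated: "E_depth n x \<Longrightarrow> (E ^^ n) x = 0"
  by (rule funpow_annihilates_filtration[of E_depth]) (use E_depth_0 E_depth_E in fastforce)+

lemma E_depth_Z3_pow: "E_depth (Suc (2 * s)) ((Z3 ^^ s) v)"
  by (induction s) (auto intro: E_depth.generator E_depth.Z3[THEN E_depth_mono])

lemma H_Z3_pow_v: "H ((Z3 ^^ s) v) = sc (of_int (int N - 3 * int s)) ((Z3 ^^ s) v)"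
proof (induction s)
  case (Suc s)
  have "H ((Z3 ^^ Suc s) v) = Z3 (H ((Z3 ^^ s) v)) + sc (-3) (Z3 ((Z3 ^^ s) v))"
    by (simp add: comm_H_Z3 del: scale_minus_left)
  also have "\<dots> = sc (of_int (int N - 3 * int s) + (-3)) (Z3 ((Z3 ^^ s) v))"
    by (simp only: Suc.IH rho_scale scale_left_distrib)
  finally show ?case by simp
qed (simp add: H_v)

lemma F_pow_Z3_pow: "(F ^^ r) ((Z3 ^^ s) x) = (Z3 ^^ s) ((F ^^ r) x)"
proof -
  have "F ((Z3 ^^ s) y) = (Z3 ^^ s) (F y)" for y
    by (induction s) (simp_all add: comm_F_Z3)
  then show ?thesis by (induction r) simp_all
qed

lemma Z3_pow_F_pow_v: "N < r + s \<Longrightarrow> (Z3 ^^ s) ((F ^^ r) v) = 0"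
proof -
  assume "N < r + s"
  have "(F ^^ r) ((Z3 ^^ s) v) = 0"
  proof (rule F_pow_vanishes[OF H_Z3_pow_v, where p = "2 * s" and M = "Suc N"])
    show "(E ^^ Suc (2 * s)) ((Z3 ^^ s) v) = 0"
      by (rule E_depth_annihilated[OF E_depth_Z3_pow])
    show "(F ^^ Suc N) ((Z3 ^^ s) v) = 0"
      by (simp only: F_pow_Z3_pow F_pow_v funpow_zero_fixed rho_zero)
    show "int N - 3 * int s + int (2 * s) < int r"
      using \<open>N < r + s\<close> by simp
  qed
  then show ?thesis by (simp add: F_pow_Z3_pow)
qed

end

lemma g2_generator_if_F_rels:
  assumes "min m2 n2 = 0" and "current_rep sc \<rho>" and "F_rels sc \<rho> m1 m2 n1 n2 v"
  shows "g2_generator sc \<rho> v (m1 + n1)"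
proof -
  interpret g2_current_rep sc \<rho> by (rule g2_current_rep.intro) (fact assms(2))
  note rels = assms(3)[unfolded F_rels_def]
  have "divpow sc (\<rho> (xm R10) 0) (wt_on (m1 + n1) (m2 + n2) R10 + 1) v = 0"
    using rels by blast
  then have F_pow: "(F ^^ Suc (m1 + n1)) v = 0"
    by (simp add: divpow_eq_0_iff wt_on_def One_nat_def del: funpow.simps)
  have "divpow sc (\<rho> (xm R01) 1) (min (wt_on m1 m2 R01) (wt_on n1 n2 R01) + 1) v = 0"
    using rels by blast
  then have Z0: "Z0 v = 0"
    using assms(1) by (simp add: divpow_eq_0_iff wt_on_def One_nat_def)
  have high: "\<rho> c r v = 0" if "2 \<le> r" for c r
  proof -
    have "(\<exists>a. c = xp a) \<or> (\<exists>a. c = xm a) \<or> c = H1 \<or> c = H2"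
      by (cases c) (blast intro: xp.simps[symmetric] xm.simps[symmetric])+
    then show ?thesis using rels that by auto
  qed
  have E_v: "E v = 0"
    using rels by (metis xp.simps(1))
  show ?thesis
    by unfold_locales (use rels F_pow E_v Z0 high in auto)
qed

theorem lemma6p1:
  fixes sc :: "complex \<Rightarrow> 'v::ab_group_add \<Rightarrow> 'v"
    and \<rho> :: "g2b \<Rightarrow> nat \<Rightarrow> 'v \<Rightarrow> 'v"
    and v :: 'v
    and m1 m2 n1 n2 :: nat
  assumes "min m2 n2 = 0"
    and "current_rep sc \<rho>"
    and "F_rels sc \<rho> m1 m2 n1 n2 v"
  shows "(\<forall>r s. r + s > m1 + n1 \<longrightarrow>
            divpow sc (\<rho> Xm31 1) s (divpow sc (\<rho> Xm10 0) r v) = 0) \<and>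
         (\<forall>r s. int r - int s > int (m1 + n1) \<longrightarrow>
            divpow sc (\<rho> Xm10 0) r (divpow sc (\<rho> Xm11 1) s v) = 0)"
proof -
  interpret g2_generator sc \<rho> v "m1 + n1"
    using g2_generator_if_F_rels[OF assms] .
  show ?thesis
    using Z3_pow_F_pow_v F_pow_Z1_pow_v by (simp add: divpow_divpow_eq_0_iff)
qed

end
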